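(* Let $V$ be a metric 3-Lie algebra and $I\lhd V$ an ideal. Then (1) $I^\perp\lhd V$ is also an ideal; (2) $I^\perp\lhd Z(I)$; and (3) if $I$ is minimal then $I^\perp$ is maximal.
   Context: A metric 3-Lie algebra is a finite-dimensional real vector space $V$ with a totally skewsymmetric trilinear bracket satisfying the fundamental identity $[x,y,[z,s,t]]=[[x,y,z],s,t]+[z,[x,y,s],t]+[z,s,[x,y,t]]$ and a nondegenerate symmetric bilinear form $\langle-,-\rangle$ with $\langle[x,y,z],s\rangle+\langle z,[x,y,s]\rangle=0$. For subspaces $W_i$, $[W_1,W_2,W_3]$ is the span of brackets of their elements. An ideal $I\lhd V$ is a subspace with $[I,V,V]\subset I$; for a subalgebra $S$ (subspace with $[S,S,S]\subset S$), $I\lhd S$ means $I\subset S$ and $[I,S,S]\subset I$. $I^\perp$ is the orthogonal complement with respect to $\langle-,-\rangle$. The centraliser of a subspace $W$ is $Z(W)=\{z\in V:[z,w,y]=0\ \forall w\in W,y\in V\}$ (a subalgebra). An ideal $I$ is minimal if every ideal contained in $I$ is $0$ or $I$; maximal if every ideal containing $I$ is $I$ or $V$. *)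

theory Defs
  imports "HOL-Analysis.Analysis"
begin

text \<open>A metric 3-Lie algebra on a finite-dimensional real vector space (modelled by a type
  of class euclidean_space; its own inner product is NOT used), given by a ternary bracket
  br and a bilinear form B.\<close>

definition metric_3lie :: "('a::euclidean_space \<Rightarrow> 'a \<Rightarrow> 'a \<Rightarrow> 'a) \<Rightarrow> ('a \<Rightarrow> 'a \<Rightarrow> real) \<Rightarrow> bool" where
  "metric_3lie br B \<longleftrightarrow>
     (\<forall>y z. linear (\<lambda>x. br x y z)) \<and> (\<forall>x z. linear (\<lambda>y. br x y z)) \<and> (\<forall>x y. linear (\<lambda>z. br x y z)) \<and>
     (\<forall>x y z. br y x z = - br x y z) \<and> (\<forall>x y z. br x z y = - br x y z) \<and>
     (\<forall>x y z s t. br x y (br z s t) = br (br x y z) s t + br z (br x y s) t + br z s (br x y t)) \<and>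
     (\<forall>y. linear (\<lambda>x. B x y)) \<and> (\<forall>x. linear (\<lambda>y. B x y)) \<and>
     (\<forall>x y. B x y = B y x) \<and>
     (\<forall>x. (\<forall>y. B x y = 0) \<longrightarrow> x = 0) \<and>
     (\<forall>x y z s. B (br x y z) s + B z (br x y s) = 0)"

definition ideal3 :: "('a::real_vector \<Rightarrow> 'a \<Rightarrow> 'a \<Rightarrow> 'a) \<Rightarrow> 'a set \<Rightarrow> bool" where
  "ideal3 br I \<longleftrightarrow> subspace I \<and> (\<forall>x\<in>I. \<forall>y z. br x y z \<in> I)"

definition ideal3_in :: "('a::real_vector \<Rightarrow> 'a \<Rightarrow> 'a \<Rightarrow> 'a) \<Rightarrow> 'a set \<Rightarrow> 'a set \<Rightarrow> bool" where
  "ideal3_in br I S \<longleftrightarrow> subspace I \<and> I \<subseteq> S \<and> (\<forall>x\<in>I. \<forall>y\<in>S. \<forall>z\<in>S. br x y z \<in> I)"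

definition orth3 :: "('a \<Rightarrow> 'a \<Rightarrow> real) \<Rightarrow> 'a set \<Rightarrow> 'a set" where
  "orth3 B W = {x. \<forall>y\<in>W. B x y = 0}"

definition centraliser3 :: "('a::real_vector \<Rightarrow> 'a \<Rightarrow> 'a \<Rightarrow> 'a) \<Rightarrow> 'a set \<Rightarrow> 'a set" where
  "centraliser3 br W = {z. \<forall>w\<in>W. \<forall>y. br z w y = 0}"

definition minimal_ideal3 :: "('a::real_vector \<Rightarrow> 'a \<Rightarrow> 'a \<Rightarrow> 'a) \<Rightarrow> 'a set \<Rightarrow> bool" where
  "minimal_ideal3 br I \<longleftrightarrow> ideal3 br I \<and> (\<forall>J. ideal3 br J \<and> J \<subseteq> I \<longrightarrow> J = {0} \<or> J = I)"

definition maximal_ideal3 :: "('a::real_vector \<Rightarrow> 'a \<Rightarrow> 'a \<Rightarrow> 'a) \<Rightarrow> 'a set \<Rightarrow> bool" where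
  "maximal_ideal3 br I \<longleftrightarrow> ideal3 br I \<and> (\<forall>J. ideal3 br J \<and> I \<subseteq> J \<longrightarrow> J = I \<or> J = UNIV)"

end

theory Submission
  imports Defs
begin

text \<open>Invariance of the form makes \<open>x \<mapsto> [x,y,z]\<close> skew-adjoint, so \<open>\<langle>[w,y,z],s\<rangle> = -\<langle>z,[w,y,s]\<rangle>\<close>.
  Moving the bracket across the form thus shows that \<open>I\<^sup>\<perp>\<close> is an ideal and that brackets of
  \<open>I\<^sup>\<perp>\<close> with \<open>I\<close> pair to zero with everything, hence vanish by nondegeneracy. For the last part,
  \<open>\<perp>\<close> is an inclusion-reversing involution on subspaces mapping ideals to ideals, so it turns a
  minimal ideal into a maximal one.\<close>

lemma nondegenerate_form_representation:
  fixes B :: "'a::euclidean_space \<Rightarrow> 'a \<Rightarrow> real"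
  assumes lin1: "\<And>y. linear (\<lambda>x. B x y)" and lin2: "\<And>x. linear (\<lambda>y. B x y)"
    and nondeg: "\<And>x. (\<forall>y. B x y = 0) \<Longrightarrow> x = 0"
  obtains T where "surj T" and "\<And>x y. B x y = T x \<bullet> y"
proof
  define T where "T x = (\<Sum>b\<in>Basis. B x b *\<^sub>R b)" for x
  show rep: "B x y = T x \<bullet> y" for x y
  proof -
    have "B x y = B x (\<Sum>b\<in>Basis. (y \<bullet> b) *\<^sub>R b)" by (simp add: euclidean_representation)
    also have "\<dots> = (\<Sum>b\<in>Basis. (y \<bullet> b) * B x b)"
      by (simp add: linear_sum[OF lin2] linear_scale[OF lin2])
    also have "\<dots> = T x \<bullet> y"
      by (simp add: T_def inner_sum_left inner_commute[of y] mult.commute)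
    finally show ?thesis .
  qed
  have "linear T" unfolding T_def
    by (rule linearI) (simp_all add: linear_add[OF lin1] linear_scale[OF lin1] scaleR_add_left
        sum.distrib scaleR_sum_right)
  moreover have "inj T"
    using nondeg rep by (auto simp: linear_injective_0[OF \<open>linear T\<close>])
  ultimately show "surj T" using linear_injective_imp_surjective by blast
qed

lemma orth3_orth3:
  fixes B :: "'a::euclidean_space \<Rightarrow> 'a \<Rightarrow> real"
  assumes lin1: "\<And>y. linear (\<lambda>x. B x y)" and lin2: "\<And>x. linear (\<lambda>y. B x y)"
    and sym: "\<And>x y. B x y = B y x" and nondeg: "\<And>x. (\<forall>y. B x y = 0) \<Longrightarrow> x = 0"
    and W: "subspace W"
  shows "orth3 B (orth3 B W) = W"
proof -
  obtain T where "surj T" and rep: "\<And>x y. B x y = T x \<bullet> y"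
    using nondegenerate_form_representation[OF lin1 lin2 nondeg] by blast
  \<comment> \<open>The Riesz map \<open>T\<close> of \<open>B\<close> reduces \<open>orth3\<close> to the Euclidean orthogonal complement.\<close>
  have orth: "orth3 B V = {y. T y \<in> V\<^sup>\<bottom>}" for V
    by (auto simp: orth3_def orthogonal_comp_def orthogonal_def rep inner_commute)
  have "orth3 B (orth3 B W) = {x. \<forall>y. T y \<in> W\<^sup>\<bottom> \<longrightarrow> T y \<bullet> x = 0}"
  proof -
    have "B x y = T y \<bullet> x" for x y using rep sym by metis
    then show ?thesis unfolding orth[of W] by (auto simp: orth3_def)
  qed
  also have "\<dots> = {x. \<forall>u\<in>W\<^sup>\<bottom>. u \<bullet> x = 0}"
    using \<open>surj T\<close> by (metis surjD)
  also have "\<dots> = W\<^sup>\<bottom>\<^sup>\<bottom>" by (auto simp: orthogonal_comp_def orthogonal_def)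
  also have "\<dots> = W" using orthogonal_comp_self[OF W] .
  finally show ?thesis .
qed

lemma orth3_antimono: "V \<subseteq> W \<Longrightarrow> orth3 B W \<subseteq> orth3 B V"
  unfolding orth3_def by auto

lemma subspace_orth3:
  assumes "\<And>y. linear (\<lambda>x. B x y)"
  shows "subspace (orth3 B W)"
  unfolding subspace_def orth3_def
  using linear_add[OF assms] linear_scale[OF assms] linear_0[OF assms] by auto

lemma orth3_zero:
  assumes "\<And>x. linear (\<lambda>y. B x y)"
  shows "orth3 B {0} = UNIV"
  using linear_0[OF assms] unfolding orth3_def by simp

lemma metric_3lie_bracket_cyclic:
  assumes "metric_3lie br B"
  shows "br x y z = br y z x"
proof -
  have "br y z x = - br y x z" and "br y x z = - br x y z"
    using assms unfolding metric_3lie_def by blast+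
  then show ?thesis by simp
qed

lemma metric_3lie_invariant:
  assumes "metric_3lie br B"
  shows "B (br x y z) s = - B z (br x y s)"
proof -
  have "B (br x y z) s + B z (br x y s) = 0"
    using assms unfolding metric_3lie_def by blast
  then show ?thesis by linarith
qed

lemma ideal3_orth3:
  assumes M: "metric_3lie br B" and I: "ideal3 br I"
  shows "ideal3 br (orth3 B I)"
proof -
  have "br x y z \<in> orth3 B I" if x: "x \<in> orth3 B I" for x y z
  proof -
    have "B (br x y z) w = 0" if w: "w \<in> I" for w
    proof -
      have "br y z w \<in> I"
        using I w metric_3lie_bracket_cyclic[OF M, of w y z] unfolding ideal3_def by metis
      then have "B x (br y z w) = 0" using x unfolding orth3_def by blast
      then show ?thesis
        using metric_3lie_invariant[OF M, of y z x w] metric_3lie_bracket_cyclic[OF M, of x y z]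
        by simp
    qed
    then show ?thesis unfolding orth3_def by auto
  qed
  moreover have "subspace (orth3 B I)"
    by (rule subspace_orth3) (use M in \<open>simp add: metric_3lie_def\<close>)
  ultimately show ?thesis unfolding ideal3_def by blast
qed

lemma orth3_subset_centraliser3:
  assumes M: "metric_3lie br B" and I: "ideal3 br I"
  shows "orth3 B I \<subseteq> centraliser3 br I"
proof
  fix z assume z: "z \<in> orth3 B I"
  have nondeg: "\<And>x. (\<forall>y. B x y = 0) \<Longrightarrow> x = 0"
    using M unfolding metric_3lie_def by blast
  have "br z w y = 0" if w: "w \<in> I" for w y
  proof (rule nondeg, intro allI)
    fix s
    have "br w y s \<in> I" using I w unfolding ideal3_def by blast
    then have "B z (br w y s) = 0" using z unfolding orth3_def by blast
    then show "B (br z w y) s = 0"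
      using metric_3lie_invariant[OF M, of w y z s] metric_3lie_bracket_cyclic[OF M, of z w y]
      by simp
  qed
  then show "z \<in> centraliser3 br I" unfolding centraliser3_def by auto
qed

lemma maximal_ideal3_orth3:
  assumes M: "metric_3lie br B" and min: "minimal_ideal3 br I"
  shows "maximal_ideal3 br (orth3 B I)"
proof -
  have I: "ideal3 br I" using min unfolding minimal_ideal3_def by blast
  have lin1: "\<And>y. linear (\<lambda>x. B x y)" and lin2: "\<And>x. linear (\<lambda>y. B x y)"
    and sym: "\<And>x y. B x y = B y x" and nondeg: "\<And>x. (\<forall>y. B x y = 0) \<Longrightarrow> x = 0"
    using M unfolding metric_3lie_def by blast+
  note orth_orth = orth3_orth3[OF lin1 lin2 sym nondeg]
  have "J = orth3 B I \<or> J = UNIV" if J: "ideal3 br J" "orth3 B I \<subseteq> J" for J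
  proof -
    have "orth3 B J \<subseteq> I"
      using orth3_antimono[OF J(2)] orth_orth I unfolding ideal3_def by blast
    then have "orth3 B J = {0} \<or> orth3 B J = I"
      using min ideal3_orth3[OF M J(1)] unfolding minimal_ideal3_def by blast
    moreover have "orth3 B (orth3 B J) = J" using orth_orth J(1) unfolding ideal3_def by blast
    moreover have "orth3 B {0} = UNIV" using orth3_zero[OF lin2] .
    ultimately show ?thesis by metis
  qed
  then show ?thesis using ideal3_orth3[OF M I] unfolding maximal_ideal3_def by blast
qed

theorem mainTheorem9:
  fixes br :: "'a::euclidean_space \<Rightarrow> 'a \<Rightarrow> 'a \<Rightarrow> 'a" and B :: "'a \<Rightarrow> 'a \<Rightarrow> real" and I :: "'a set"
  assumes "metric_3lie br B" and "ideal3 br I"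
  shows "ideal3 br (orth3 B I)
    \<and> ideal3_in br (orth3 B I) (centraliser3 br I)
    \<and> (minimal_ideal3 br I \<longrightarrow> maximal_ideal3 br (orth3 B I))"
proof -
  have ideal: "ideal3 br (orth3 B I)" using ideal3_orth3[OF assms] .
  moreover have "ideal3_in br (orth3 B I) (centraliser3 br I)"
    using ideal orth3_subset_centraliser3[OF assms] unfolding ideal3_def ideal3_in_def by blast
  moreover have "minimal_ideal3 br I \<longrightarrow> maximal_ideal3 br (orth3 B I)"
    using maximal_ideal3_orth3[OF assms(1)] by blast
  ultimately show ?thesis by blast
qed

end
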